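(* Let $P\subseteq\mathbb{C}$ be a finitely generated field extension of $\mathbb{Q}$ and $a_1,\dots,a_{r+1}\in\mathbb{C}^\times$. If $\{a_1,\dots,a_r,a_{r+1}\}$ is simple in $P_{r+1}=P(a_1,\dots,a_{r+1})$, then $\{a_1,\dots,a_r\}$ is simple in $P_r=P(a_1,\dots,a_r)$.
   Context: For a field $K$, a tuple $\{c_1,\dots,c_k\}\subseteq K^{\times}$ is simple in $K$ if it is multiplicatively independent ($c_1^{n_1}\cdots c_k^{n_k}=1$ with $n_i\in\mathbb{Z}$ only if all $n_i=0$) and the multiplicative subgroup $\langle c_1,\dots,c_k\rangle$ it generates is pure in $K^{\times}$ (whenever $x^n=c$, $c\in\langle c_1,\dots,c_k\rangle$, $n\ge1$, has a solution in $K^\times$, it has one in $\langle c_1,\dots,c_k\rangle$). *)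

theory Defs
  imports Complex_Main
begin

definition is_subfield :: "complex set \<Rightarrow> bool" where
  "is_subfield K \<longleftrightarrow> 0 \<in> K \<and> 1 \<in> K \<and>
     (\<forall>x\<in>K. \<forall>y\<in>K. x + y \<in> K \<and> x * y \<in> K) \<and>
     (\<forall>x\<in>K. - x \<in> K) \<and> (\<forall>x\<in>K. x \<noteq> 0 \<longrightarrow> inverse x \<in> K)"

definition field_gen :: "complex set \<Rightarrow> complex set" where
  "field_gen S = \<Inter> {K. is_subfield K \<and> S \<subseteq> K}"

definition fin_gen_over_Q :: "complex set \<Rightarrow> bool" where
  "fin_gen_over_Q P \<longleftrightarrow> (\<exists>F. finite F \<and> P = field_gen F)"

definition mult_indep :: "complex list \<Rightarrow> bool" where
  "mult_indep cs \<longleftrightarrow> (\<forall>n :: nat \<Rightarrow> int.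
     (\<Prod>i<length cs. (cs ! i) powi (n i)) = 1 \<longrightarrow> (\<forall>i<length cs. n i = 0))"

definition mult_span :: "complex list \<Rightarrow> complex set" where
  "mult_span cs = {(\<Prod>i<length cs. (cs ! i) powi (n i)) | n :: nat \<Rightarrow> int. True}"

definition pure_in :: "complex set \<Rightarrow> complex set \<Rightarrow> bool" where
  "pure_in K G \<longleftrightarrow> (\<forall>c\<in>G. \<forall>n::nat. n \<ge> 1 \<longrightarrow>
     (\<exists>x\<in>K - {0}. x ^ n = c) \<longrightarrow> (\<exists>y\<in>G. y ^ n = c))"

definition simple_in :: "complex set \<Rightarrow> complex list \<Rightarrow> bool" where
  "simple_in K cs \<longleftrightarrow> set cs \<subseteq> K - {0} \<and> mult_indep cs \<and> pure_in K (mult_span cs)"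

end

theory Submission
  imports Defs
begin

text \<open>
  Only the inclusion of the smaller field in the larger one matters. Independence passes to a prefix of the tuple by padding exponent vectors with
  zeros. For purity, an \<open>n\<close>-th root in the smaller field of an element \<open>c\<close> of the smaller span
  yields, by purity in the larger field, a root \<open>y\<close> in the larger span. Since exponent vectors
  are unique by independence, comparing those of \<open>y\<^sup>n\<close> and \<open>c\<close> shows that the last generator
  occurs in \<open>y\<close> with exponent \<open>0\<close>.
\<close>

lemma field_gen_mono: "S \<subseteq> T \<Longrightarrow> field_gen S \<subseteq> field_gen T"
  unfolding field_gen_def by auto

lemma subset_field_gen: "S \<subseteq> field_gen S"
  unfolding field_gen_def by auto

definition powi_prod :: "complex list \<Rightarrow> (nat \<Rightarrow> int) \<Rightarrow> complex" where
  "powi_prod cs n = (\<Prod>i<length cs. (cs ! i) powi (n i))"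

lemma mult_span_eq_range: "mult_span cs = range (powi_prod cs)"
  unfolding mult_span_def powi_prod_def by auto

lemma mult_indep_iff:
  "mult_indep cs \<longleftrightarrow> (\<forall>n. powi_prod cs n = 1 \<longrightarrow> (\<forall>i<length cs. n i = 0))"
  unfolding mult_indep_def powi_prod_def ..

lemma powi_prod_cong:
  "(\<And>i. i < length cs \<Longrightarrow> n i = m i) \<Longrightarrow> powi_prod cs n = powi_prod cs m"
  unfolding powi_prod_def by (intro prod.cong) auto

lemma powi_prod_zero [simp]: "powi_prod cs (\<lambda>_. 0) = 1"
  unfolding powi_prod_def by simp

lemma powi_prod_append:
  "powi_prod (xs @ ys) n = powi_prod xs n * powi_prod ys (\<lambda>i. n (length xs + i))"
proof -
  let ?f = "\<lambda>i. (xs @ ys) ! i powi n i"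
  have "powi_prod (xs @ ys) n =
      prod ?f {0..<length xs} * prod ?f {length xs..<length xs + length ys}"
    unfolding powi_prod_def lessThan_atLeast0 by (simp add: prod.atLeastLessThan_concat)
  also have "prod ?f {0..<length xs} = powi_prod xs n"
    unfolding powi_prod_def lessThan_atLeast0 by (intro prod.cong) (auto simp: nth_append)
  also have "prod ?f {length xs..<length xs + length ys} =
      prod (?f \<circ> plus (length xs)) {0..<length ys}"
    using prod.atLeastLessThan_shift_bounds[of ?f 0 "length xs" "length ys"]
    by (simp add: add.commute)
  also have "\<dots> = powi_prod ys (\<lambda>i. n (length xs + i))"
    unfolding powi_prod_def lessThan_atLeast0 by (intro prod.cong) (auto simp: nth_append)
  finally show ?thesis .
qed

lemma powi_prod_mult:
  assumes "0 \<notin> set cs"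
  shows "powi_prod cs n * powi_prod cs m = powi_prod cs (\<lambda>i. n i + m i)"
proof -
  have "\<And>i. i < length cs \<Longrightarrow> cs ! i \<noteq> 0"
    using assms nth_mem by fastforce
  then show ?thesis
    unfolding powi_prod_def prod.distrib[symmetric]
    by (intro prod.cong) (auto simp: power_int_add)
qed

lemma powi_prod_power: "powi_prod cs n ^ k = powi_prod cs (\<lambda>i. int k * n i)"
  unfolding powi_prod_def prod_power_distrib
  by (intro prod.cong) (auto simp: power_int_mult mult.commute power_int_power')

lemma powi_prod_pad:
  "powi_prod (xs @ ys) (\<lambda>i. if i < length xs then n i else 0) = powi_prod xs n"
  by (simp add: powi_prod_append cong: powi_prod_cong)

lemma mult_indep_exponents_unique:
  assumes "mult_indep cs" "0 \<notin> set cs" "powi_prod cs n = powi_prod cs m" "i < length cs"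
  shows "n i = m i"
proof -
  have "powi_prod cs (\<lambda>i. n i - m i) = powi_prod cs m * powi_prod cs (\<lambda>i. - m i)"
    using powi_prod_mult[OF assms(2), of n "\<lambda>i. - m i"] assms(3) by simp
  also have "\<dots> = 1"
    using powi_prod_mult[OF assms(2), of m "\<lambda>i. - m i"] by simp
  finally show ?thesis
    using assms(1,4) unfolding mult_indep_iff by fastforce
qed

lemma mult_span_append_subset: "mult_span xs \<subseteq> mult_span (xs @ ys)"
  unfolding mult_span_eq_range
proof
  fix y
  assume "y \<in> range (powi_prod xs)"
  then obtain n where "y = powi_prod xs n"
    by blast
  then show "y \<in> range (powi_prod (xs @ ys))"
    using powi_prod_pad[of xs ys n] by (metis rangeI)
qed

lemma mult_indep_appendD:
  assumes "mult_indep (xs @ ys)"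
  shows "mult_indep xs"
  unfolding mult_indep_iff
proof (intro allI impI)
  fix n i
  assume n: "powi_prod xs n = 1" and i: "i < length xs"
  let ?n = "\<lambda>i. if i < length xs then n i else 0"
  have "powi_prod (xs @ ys) ?n = 1"
    using n by (simp add: powi_prod_pad)
  then have "\<forall>j<length (xs @ ys). ?n j = 0"
    using assms unfolding mult_indep_iff by blast
  then show "n i = 0"
    using i by (auto dest: spec[of _ i])
qed

lemma mult_span_root_in_prefix:
  assumes indep: "mult_indep (xs @ ys)" and nonzero: "0 \<notin> set (xs @ ys)"
    and y: "y \<in> mult_span (xs @ ys)" and n: "n \<ge> 1" and yn: "y ^ n \<in> mult_span xs"
  shows "y \<in> mult_span xs"
proof -
  obtain m where m: "y = powi_prod (xs @ ys) m"
    using y unfolding mult_span_eq_range by auto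
  obtain k where k: "y ^ n = powi_prod xs k"
    using yn unfolding mult_span_eq_range by auto
  have exponents: "powi_prod (xs @ ys) (\<lambda>i. int n * m i) =
      powi_prod (xs @ ys) (\<lambda>i. if i < length xs then k i else 0)"
    using k m powi_prod_power powi_prod_pad by metis
  have "int n * m (length xs + i) = 0" if "i < length ys" for i
    using mult_indep_exponents_unique[OF indep nonzero exponents, of "length xs + i"] that by simp
  then have "powi_prod ys (\<lambda>i. m (length xs + i)) = 1"
    using n by (simp cong: powi_prod_cong)
  then have "y = powi_prod xs m"
    using m by (simp add: powi_prod_append)
  then show ?thesis
    unfolding mult_span_eq_range by simp
qed

lemma pure_in_restrict:
  assumes "pure_in M H" "K \<subseteq> M" "G \<subseteq> H"
    and "\<And>y n. y \<in> H \<Longrightarrow> n \<ge> 1 \<Longrightarrow> y ^ n \<in> G \<Longrightarrow> y \<in> G"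
  shows "pure_in K G"
  unfolding pure_in_def
proof (intro ballI allI impI)
  fix c n
  assume c: "c \<in> G" and n: "n \<ge> 1" and "\<exists>x\<in>K - {0}. x ^ n = c"
  then have "\<exists>x\<in>M - {0}. x ^ n = c"
    using assms(2) by blast
  then obtain y where "y \<in> H" "y ^ n = c"
    using assms(1,3) c n unfolding pure_in_def by blast
  then show "\<exists>y\<in>G. y ^ n = c"
    using assms(4) c n by blast
qed

theorem lemma2p5:
  fixes P :: "complex set" and as :: "complex list" and b :: complex
  assumes "fin_gen_over_Q P"
    and "is_subfield P"
    and "set (as @ [b]) \<subseteq> - {0}"
    and "simple_in (field_gen (P \<union> set (as @ [b]))) (as @ [b])"
  shows "simple_in (field_gen (P \<union> set as)) as"
proof -
  have nonzero: "0 \<notin> set (as @ [b])"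
    using assms(3) by auto
  have indep: "mult_indep (as @ [b])"
    and pure: "pure_in (field_gen (P \<union> set (as @ [b]))) (mult_span (as @ [b]))"
    using assms(4) unfolding simple_in_def by auto
  have "set as \<subseteq> field_gen (P \<union> set as) - {0}"
    using subset_field_gen[of "P \<union> set as"] nonzero by auto
  moreover have "mult_indep as"
    using indep by (rule mult_indep_appendD)
  moreover have "pure_in (field_gen (P \<union> set as)) (mult_span as)"
    using pure field_gen_mono mult_span_append_subset
      mult_span_root_in_prefix[OF indep nonzero]
    by (rule pure_in_restrict) auto
  ultimately show ?thesis
    unfolding simple_in_def by blast
qed

end
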